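(* Let $X$ be an open Riemann surface and $G$ a finite group acting on $X$ by holomorphic automorphisms, transitively on the set of connected components of $X$, such that the stabiliser of each component acts effectively on that component; let $\pi:X\to\widetilde X=X/G$ be the quotient projection. Then a compact set $\widetilde S\subset\widetilde X$ is Runge in $\widetilde X$ if and only if $S=\pi^{-1}(\widetilde S)$ is Runge in $X$.
   Context: A compact set $S$ in an open Riemann surface $X$ is Runge if it is $\mathcal{O}(X)$-convex, i.e. for every $p\in X\setminus S$ there is a holomorphic function $h$ on $X$ with $|h(p)|>\sup_S|h|$. Under the hypotheses, $X/G$ is a connected Riemann surface and $\pi$ is holomorphic. *)

theory Defs
  imports "HOL-Complex_Analysis.Complex_Analysis" "HOL-Algebra.Group_Action"
begin

definition complex_atlas :: "'a topology \<Rightarrow> ('a set \<times> ('a \<Rightarrow> complex)) set \<Rightarrow> bool" where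
  "complex_atlas X A \<longleftrightarrow>
     \<Union>(fst ` A) = topspace X \<and>
     (\<forall>(U,\<phi>)\<in>A. openin X U \<and> open (\<phi> ` U) \<and>
        homeomorphic_map (subtopology X U) (top_of_set (\<phi> ` U)) \<phi>) \<and>
     (\<forall>(U,\<phi>)\<in>A. \<forall>(V,\<psi>)\<in>A. (\<psi> \<circ> inv_into U \<phi>) holomorphic_on (\<phi> ` (U \<inter> V)))"

text \<open>Riemann surface (connectedness not required): Hausdorff space with a complex atlas.\<close>
definition riemann_surface :: "'a topology \<Rightarrow> ('a set \<times> ('a \<Rightarrow> complex)) set \<Rightarrow> bool" where
  "riemann_surface X A \<longleftrightarrow> Hausdorff_space X \<and> complex_atlas X A"

definition open_riemann_surface :: "'a topology \<Rightarrow> ('a set \<times> ('a \<Rightarrow> complex)) set \<Rightarrow> bool" where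
  "open_riemann_surface X A \<longleftrightarrow> riemann_surface X A \<and>
     (\<forall>C\<in>connected_components_of X. \<not> compactin X C)"

definition holomorphic_fun :: "'a topology \<Rightarrow> ('a set \<times> ('a \<Rightarrow> complex)) set \<Rightarrow> ('a \<Rightarrow> complex) \<Rightarrow> bool" where
  "holomorphic_fun X A h \<longleftrightarrow> (\<forall>(U,\<phi>)\<in>A. (h \<circ> inv_into U \<phi>) holomorphic_on (\<phi> ` U))"

definition holomorphic_map ::
  "'a topology \<Rightarrow> ('a set \<times> ('a \<Rightarrow> complex)) set \<Rightarrow> 'b topology \<Rightarrow> ('b set \<times> ('b \<Rightarrow> complex)) set
   \<Rightarrow> ('a \<Rightarrow> 'b) \<Rightarrow> bool" where
  "holomorphic_map X A Y B f \<longleftrightarrow> continuous_map X Y f \<and>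
     (\<forall>(U,\<phi>)\<in>A. \<forall>(V,\<psi>)\<in>B.
        (\<psi> \<circ> f \<circ> inv_into U \<phi>) holomorphic_on (\<phi> ` (U \<inter> {x \<in> topspace X. f x \<in> V})))"

definition holomorphic_automorphism :: "'a topology \<Rightarrow> ('a set \<times> ('a \<Rightarrow> complex)) set \<Rightarrow> ('a \<Rightarrow> 'a) \<Rightarrow> bool" where
  "holomorphic_automorphism X A g \<longleftrightarrow> bij_betw g (topspace X) (topspace X) \<and>
     holomorphic_map X A X A g \<and> holomorphic_map X A X A (inv_into (topspace X) g)"

text \<open>Runge compact set: compact and O(X)-convex. Since S is compact and h continuous,
sup over S of |h| is attained, so "|h p| > sup_S |h|" is written pointwise (this also
handles S empty correctly).\<close>
definition runge :: "'a topology \<Rightarrow> ('a set \<times> ('a \<Rightarrow> complex)) set \<Rightarrow> 'a set \<Rightarrow> bool" where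
  "runge X A S \<longleftrightarrow> compactin X S \<and>
     (\<forall>p \<in> topspace X - S. \<exists>h. holomorphic_fun X A h \<and> (\<forall>x\<in>S. norm (h x) < norm (h p)))"

end

theory Submission
  imports Defs "HOL-Computational_Algebra.Polynomial"
begin

text \<open>Pulling back along the proper holomorphic map \<pi> shows that the preimage of a Runge set is
Runge. For the converse, let h on X satisfy |h| \<le> M < |h p| on S. For large N the coefficients
of \<Prod>(T - h(g x)^N), the product running over g \<in> G, are G-invariant holomorphic functions on
X, so they descend to X/G: \<pi> has finite fibres, hence is locally nonconstant in charts, and the
induced function is continuous by the open mapping theorem, holomorphic off the critical values,
and therefore holomorphic by Riemann's removable singularity theorem. Over S all roots of the
polynomial have modulus at most M^N, so its coefficients are dominated by those of (T + M^N)^|G|;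
at p one root has modulus |h p|^N, and once (1 + (M / |h p|)^N)^|G| < 2 some coefficient is
larger at p than anywhere on S.\<close>

lemma complex_atlas_chartD:
  assumes "complex_atlas X A" "(U,\<phi>) \<in> A"
  shows "openin X U" "open (\<phi> ` U)" "homeomorphic_map (subtopology X U) (top_of_set (\<phi> ` U)) \<phi>"
    "U \<subseteq> topspace X" "inj_on \<phi> U" "\<And>x. x \<in> U \<Longrightarrow> inv_into U \<phi> (\<phi> x) = x"
proof -
  show o: "openin X U" "open (\<phi> ` U)"
    and h: "homeomorphic_map (subtopology X U) (top_of_set (\<phi> ` U)) \<phi>"
    using assms unfolding complex_atlas_def by fast+
  show s: "U \<subseteq> topspace X" using o openin_subset by blast
  show i: "inj_on \<phi> U" using homeomorphic_imp_injective_map[OF h] s by (simp add: Int_absorb1)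
  show "\<And>x. x \<in> U \<Longrightarrow> inv_into U \<phi> (\<phi> x) = x" using i by simp
qed

lemma complex_atlas_cover:
  assumes "complex_atlas X A" "x \<in> topspace X"
  obtains U \<phi> where "(U,\<phi>) \<in> A" "x \<in> U"
proof -
  have "x \<in> \<Union>(fst ` A)" using assms unfolding complex_atlas_def by simp
  then obtain p where "p \<in> A" "x \<in> fst p" by blast
  then show ?thesis using that[of "fst p" "snd p"] by simp
qed

lemma holomorphic_map_chartD:
  assumes "holomorphic_map X A Y B f" "(U,\<phi>) \<in> A" "(V,\<psi>) \<in> B"
  shows "(\<psi> \<circ> f \<circ> inv_into U \<phi>) holomorphic_on (\<phi> ` (U \<inter> {x \<in> topspace X. f x \<in> V}))"
  using assms unfolding holomorphic_map_def by fast

lemma holomorphic_fun_chartD: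
  assumes "holomorphic_fun X A h" "(U,\<phi>) \<in> A"
  shows "(h \<circ> inv_into U \<phi>) holomorphic_on (\<phi> ` U)"
  using assms unfolding holomorphic_fun_def by fast

lemma complex_atlas_open_chart_image:
  assumes "complex_atlas X A" "(U,\<phi>) \<in> A" "openin X W" "W \<subseteq> U"
  shows "open (\<phi> ` W)"
proof -
  note c = complex_atlas_chartD[OF assms(1,2)]
  have "openin (subtopology X U) W"
    unfolding openin_subtopology using assms(3,4) by blast
  then have "openin (top_of_set (\<phi> ` U)) (\<phi> ` W)"
    using homeomorphic_map_openness[OF c(3)] assms(4) c(4) by auto
  then show ?thesis using c(2) openin_open_trans by blast
qed

section \<open>Holomorphic functions on a surface\<close>

lemma holomorphic_on_if_locally_holomorphic:
  assumes "open S" "\<And>z. z \<in> S \<Longrightarrow> \<exists>T. open T \<and> z \<in> T \<and> f holomorphic_on T"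
  shows "f holomorphic_on S"
  using assms holomorphic_on_imp_differentiable_at
  by (metis field_differentiable_def holomorphic_on_open)

lemma holomorphic_fun_comp:
  assumes AX: "complex_atlas X A" and BY: "complex_atlas Y B"
    and f: "holomorphic_map X A Y B f" and h: "holomorphic_fun Y B h"
  shows "holomorphic_fun X A (h \<circ> f)"
  unfolding holomorphic_fun_def
proof clarify
  fix U \<phi> assume UA: "(U,\<phi>) \<in> A"
  note c = complex_atlas_chartD[OF AX UA]
  have fc: "continuous_map X Y f" using f by (simp add: holomorphic_map_def)
  show "(h \<circ> f \<circ> inv_into U \<phi>) holomorphic_on \<phi> ` U"
  proof (rule holomorphic_on_if_locally_holomorphic[OF c(2)])
    fix z assume "z \<in> \<phi> ` U"
    then obtain x where xU: "x \<in> U" and z: "z = \<phi> x" by blast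
    then have "f x \<in> topspace Y" using fc c(4) by (auto simp: continuous_map_def)
    then obtain V \<psi> where VB: "(V,\<psi>) \<in> B" and fxV: "f x \<in> V"
      using complex_atlas_cover[OF BY] by blast
    note d = complex_atlas_chartD[OF BY VB]
    define W where "W = U \<inter> {x \<in> topspace X. f x \<in> V}"
    have "openin X W" unfolding W_def
      by (rule openin_Int[OF c(1) openin_continuous_map_preimage[OF fc d(1)]])
    then have oW: "open (\<phi> ` W)"
      using complex_atlas_open_chart_image[OF AX UA] W_def by blast
    have "(\<psi> \<circ> f \<circ> inv_into U \<phi>) ` (\<phi> ` W) \<subseteq> \<psi> ` V"
      using c(6) by (auto simp: W_def)
    then have "((h \<circ> inv_into V \<psi>) \<circ> (\<psi> \<circ> f \<circ> inv_into U \<phi>)) holomorphic_on \<phi> ` W"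
      using holomorphic_on_compose_gen holomorphic_map_chartD[OF f UA VB]
        holomorphic_fun_chartD[OF h VB] W_def by blast
    moreover have "((h \<circ> inv_into V \<psi>) \<circ> (\<psi> \<circ> f \<circ> inv_into U \<phi>)) z' = (h \<circ> f \<circ> inv_into U \<phi>) z'"
      if "z' \<in> \<phi> ` W" for z'
      using that c(6) d(6) by (auto simp: W_def)
    ultimately have "(h \<circ> f \<circ> inv_into U \<phi>) holomorphic_on \<phi> ` W"
      by (rule holomorphic_transform)
    moreover have "z \<in> \<phi> ` W" using z xU fxV c(4) W_def by blast
    ultimately show "\<exists>T. open T \<and> z \<in> T \<and> (h \<circ> f \<circ> inv_into U \<phi>) holomorphic_on T"
      using oW by blast
  qed
qed

lemma holomorphic_fun_continuous_map:
  assumes AX: "complex_atlas X A" and h: "holomorphic_fun X A h"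
  shows "continuous_map X euclidean h"
  unfolding continuous_map_def
proof (intro conjI allI impI)
  show "h \<in> topspace X \<rightarrow> topspace euclidean" by simp
  fix Q :: "complex set" assume "openin euclidean Q"
  then have oQ: "open Q" by simp
  have chart_preimage: "openin X {x \<in> U. h x \<in> Q}" if UA: "(U,\<phi>) \<in> A" for U \<phi>
  proof -
    note c = complex_atlas_chartD[OF AX UA]
    define T where "T = (h \<circ> inv_into U \<phi>) -` Q \<inter> \<phi> ` U"
    have "continuous_on (\<phi> ` U) (h \<circ> inv_into U \<phi>)"
      by (rule holomorphic_on_imp_continuous_on[OF holomorphic_fun_chartD[OF h UA]])
    then have "open T" unfolding T_def using c(2) oQ continuous_on_open_vimage by blast
    then have "openin (top_of_set (\<phi> ` U)) T" using openin_open_eq[OF c(2)] by (simp add: T_def)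
    then have "openin (subtopology X U) {x \<in> topspace (subtopology X U). \<phi> x \<in> T}"
      by (rule openin_continuous_map_preimage[OF homeomorphic_imp_continuous_map[OF c(3)]])
    moreover have "{x \<in> topspace (subtopology X U). \<phi> x \<in> T} = {x \<in> U. h x \<in> Q}"
      using c(4) c(5) by (auto simp: T_def dest: inj_onD)
    ultimately show ?thesis using openin_trans_full[OF _ c(1)] by simp
  qed
  have "{x \<in> topspace X. h x \<in> Q} = (\<Union>p\<in>A. {x \<in> fst p. h x \<in> Q})"
  proof (intro equalityI subsetI)
    fix x assume "x \<in> {x \<in> topspace X. h x \<in> Q}"
    then obtain U \<phi> where "(U,\<phi>) \<in> A" "x \<in> U" "h x \<in> Q"
      using complex_atlas_cover[OF AX] by blast
    then show "x \<in> (\<Union>p\<in>A. {x \<in> fst p. h x \<in> Q})" by (intro UN_I[of "(U,\<phi>)"]) auto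
  next
    fix x assume "x \<in> (\<Union>p\<in>A. {x \<in> fst p. h x \<in> Q})"
    then obtain p where "p \<in> A" "x \<in> fst p" "h x \<in> Q" by blast
    then show "x \<in> {x \<in> topspace X. h x \<in> Q}"
      using complex_atlas_chartD(4)[OF AX, of "fst p" "snd p"] by auto
  qed
  moreover have "openin X (\<Union>p\<in>A. {x \<in> fst p. h x \<in> Q})"
  proof (rule openin_Union, clarify)
    fix p assume "p \<in> A"
    then show "openin X {x \<in> fst p. h x \<in> Q}" using chart_preimage[of "fst p" "snd p"] by simp
  qed
  ultimately show "openin X {x \<in> topspace X. h x \<in> Q}" by simp
qed

lemma holomorphic_fun_const: "holomorphic_fun X A (\<lambda>x. c)"
  unfolding holomorphic_fun_def by (auto simp: o_def)

lemma holomorphic_fun_add: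
  assumes "holomorphic_fun X A a" "holomorphic_fun X A b"
  shows "holomorphic_fun X A (\<lambda>x. a x + b x)"
  using holomorphic_on_add[OF holomorphic_fun_chartD[OF assms(1)] holomorphic_fun_chartD[OF assms(2)]]
  unfolding holomorphic_fun_def by (auto simp: o_def)

lemma holomorphic_fun_mult:
  assumes "holomorphic_fun X A a" "holomorphic_fun X A b"
  shows "holomorphic_fun X A (\<lambda>x. a x * b x)"
  using holomorphic_on_mult[OF holomorphic_fun_chartD[OF assms(1)] holomorphic_fun_chartD[OF assms(2)]]
  unfolding holomorphic_fun_def by (auto simp: o_def)

lemma holomorphic_fun_power:
  assumes "holomorphic_fun X A a"
  shows "holomorphic_fun X A (\<lambda>x. a x ^ n)"
  by (induction n) (simp_all add: holomorphic_fun_const holomorphic_fun_mult[OF assms])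

section \<open>Coefficients of products of linear factors\<close>

lemma coeff_linear_factor_mult:
  fixes a :: "'a::comm_ring_1"
  shows "coeff ([:a, 1:] * P) k = a * coeff P k + (case k of 0 \<Rightarrow> 0 | Suc j \<Rightarrow> coeff P j)"
  by (simp add: mult.commute[of "[:a,1:]"] coeff_pCons split: nat.split)

lemma coeff_prod_linear_insert:
  fixes c :: "'g \<Rightarrow> 'a::comm_ring_1"
  assumes "finite T" "g \<notin> T"
  shows "coeff (\<Prod>i\<in>insert g T. [:- c i, 1:]) k =
     - c g * coeff (\<Prod>i\<in>T. [:- c i, 1:]) k + (case k of 0 \<Rightarrow> 0 | Suc j \<Rightarrow> coeff (\<Prod>i\<in>T. [:- c i, 1:]) j)"
  unfolding prod.insert[OF assms] by (rule coeff_linear_factor_mult)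

lemma degree_prod_linear_le:
  assumes "finite T"
  shows "degree (\<Prod>i\<in>T. [:- c i, 1::'a::comm_ring_1:]) \<le> card T"
proof -
  have "degree (\<Prod>i\<in>T. [:- c i, 1::'a:]) \<le> (\<Sum>i\<in>T. degree [:- c i, 1::'a:])"
    by (rule degree_prod_sum_le[OF assms, unfolded o_def])
  also have "\<dots> \<le> (\<Sum>i\<in>T. 1)" by (rule sum_mono) simp
  finally show ?thesis by simp
qed

lemma coeff_prod_linear_card:
  assumes "finite T"
  shows "coeff (\<Prod>i\<in>T. [:- c i, 1::'a::comm_ring_1:]) (card T) = 1"
  using assms
proof (induction T rule: finite_induct)
  case (insert g T)
  have "coeff (\<Prod>i\<in>T. [:- c i, 1::'a:]) (Suc (card T)) = 0"
    using degree_prod_linear_le[OF insert(1), of c] by (simp add: coeff_eq_0)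
  then show ?case using insert coeff_prod_linear_insert[OF insert(1,2), of c "Suc (card T)"] by simp
qed simp

lemma norm_coeff_prod_linear_le:
  fixes c :: "'g \<Rightarrow> 'a::real_normed_field"
  assumes "finite T" "\<And>g. g \<in> T \<Longrightarrow> norm (c g) \<le> \<rho>"
  shows "norm (coeff (\<Prod>i\<in>T. [:- c i, 1:]) k) \<le> coeff ([:\<rho>, 1:] ^ card T) k"
  using assms
proof (induction T arbitrary: k rule: finite_induct)
  case (insert g T)
  define P where "P = (\<Prod>i\<in>T. [:- c i, 1:])"
  define Q where "Q = [:\<rho>, 1:] ^ card T"
  have IH: "\<And>k. norm (coeff P k) \<le> coeff Q k" unfolding P_def Q_def using insert by auto
  have cg: "norm (c g) \<le> \<rho>" using insert by auto
  then have "0 \<le> \<rho>" using norm_ge_zero order_trans by blast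
  then have "norm (- c g * coeff P k) \<le> \<rho> * coeff Q k"
    using cg IH[of k] by (simp add: norm_mult mult_mono)
  moreover have "norm (case k of 0 \<Rightarrow> 0 | Suc j \<Rightarrow> coeff P j) \<le> (case k of 0 \<Rightarrow> 0 | Suc j \<Rightarrow> coeff Q j)"
    using IH by (simp split: nat.split)
  moreover have "coeff ([:\<rho>, 1:] ^ card (insert g T)) k = \<rho> * coeff Q k + (case k of 0 \<Rightarrow> 0 | Suc j \<Rightarrow> coeff Q j)"
    unfolding Q_def card_insert_disjoint[OF insert(1,2)] power_Suc by (rule coeff_linear_factor_mult)
  ultimately show ?case
    unfolding coeff_prod_linear_insert[OF insert(1,2)] P_def[symmetric]
    by (metis (no_types, lifting) norm_triangle_le add_mono)
qed simp

lemma poly_eq_sum_atMost: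
  fixes p :: "'a::comm_ring_1 poly"
  assumes "degree p \<le> n"
  shows "poly p x = (\<Sum>i\<le>n. coeff p i * x ^ i)"
proof -
  have "poly p x = (\<Sum>i\<le>degree p. coeff p i * x ^ i)" by (rule poly_altdef)
  also have "\<dots> = (\<Sum>i\<le>n. coeff p i * x ^ i)"
    by (rule sum.mono_neutral_left) (use assms in \<open>auto simp: coeff_eq_0\<close>)
  finally show ?thesis .
qed

text \<open>The root z satisfies |z|^n \<le> (|z| + \<rho>)^n - |z|^n, because z^n is minus the lower-order part
of the polynomial at z.\<close>

lemma root_norm_bound_if_coeffs_dominated:
  fixes c :: "'g \<Rightarrow> 'a::real_normed_field"
  assumes T: "finite T" and g0: "g0 \<in> T"
    and dominated: "\<And>k. norm (coeff (\<Prod>i\<in>T. [:- c i, 1:]) k) \<le> coeff ([:\<rho>, 1:] ^ card T) k"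
  shows "2 * norm (c g0) ^ card T \<le> (norm (c g0) + \<rho>) ^ card T"
proof -
  define P where "P = (\<Prod>i\<in>T. [:- c i, 1:])"
  define Q where "Q = [:\<rho>, 1:] ^ card T"
  define m where "m = card T"
  define z where "z = c g0"
  define r where "r = norm z"
  have "poly P z = (\<Prod>i\<in>T. poly [:- c i, 1:] z)" unfolding P_def by (rule poly_prod)
  also have "\<dots> = 0" using T g0 unfolding z_def by (auto intro: prod_zero)
  finally have "poly P z = 0" .
  moreover have "poly P z = (\<Sum>i<m. coeff P i * z ^ i) + z ^ m"
    using poly_eq_sum_atMost[OF degree_prod_linear_le[OF T, of c], of z] coeff_prod_linear_card[OF T, of c]
    by (simp add: P_def m_def lessThan_Suc_atMost[symmetric])
  ultimately have "r ^ m = norm (\<Sum>i<m. coeff P i * z ^ i)"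
    unfolding r_def by (metis add.commute add_eq_0_iff norm_minus_cancel norm_power)
  also have "\<dots> \<le> (\<Sum>i<m. coeff Q i * r ^ i)"
    using dominated unfolding P_def Q_def
    by (intro order_trans[OF norm_sum] sum_mono)
      (auto simp: norm_mult norm_power r_def intro!: mult_right_mono)
  also have "\<dots> = poly Q r - r ^ m"
    using poly_eq_sum_atMost[of Q m r] degree_power_le[of "[:\<rho>, 1:]" m]
    by (simp add: Q_def m_def coeff_linear_power lessThan_Suc_atMost[symmetric])
  also have "poly Q r = (\<rho> + r) ^ m" unfolding Q_def m_def by (simp add: poly_power)
  finally show ?thesis unfolding m_def r_def z_def by (simp add: add.commute)
qed

text \<open>For large N, (1 + (M / |c g0|)^N)^n < 2, so the root c g0 ^ N violates the root bound.\<close>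

lemma exists_coeff_prod_power_gap:
  fixes c :: "'g \<Rightarrow> 'a::real_normed_field"
  assumes T: "finite T" and g0: "g0 \<in> T" and M: "0 \<le> M" "M < norm (c g0)"
  obtains N k where "coeff ([:M ^ N, 1:] ^ card T) k < norm (coeff (\<Prod>i\<in>T. [:- (c i ^ N), 1:]) k)"
proof -
  define r where "r = norm (c g0)"
  define m where "m = card T"
  have r: "0 < r" using M r_def by linarith
  have "(\<lambda>N. (1 + (M / r) ^ N) ^ m) \<longlonglongrightarrow> (1 + 0) ^ m"
    using M r by (intro tendsto_intros LIMSEQ_power_zero) (simp add: r_def)
  then have "eventually (\<lambda>N. (1 + (M / r) ^ N) ^ m < 2) sequentially"
    by (rule order_tendstoD(2)) simp
  then obtain N where N: "(1 + (M / r) ^ N) ^ m < 2" by (meson eventually_sequentially order_refl)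
  have "(r ^ N + M ^ N) ^ m = (r ^ N) ^ m * (1 + (M / r) ^ N) ^ m"
    using r by (simp add: power_divide field_simps flip: power_mult_distrib)
  also have "\<dots> < 2 * (r ^ N) ^ m" using N r by simp
  finally have "(norm (c g0 ^ N) + M ^ N) ^ m < 2 * norm (c g0 ^ N) ^ m"
    by (simp add: r_def norm_power)
  then have "\<not> (\<forall>k. norm (coeff (\<Prod>i\<in>T. [:- (c i ^ N), 1:]) k) \<le> coeff ([:M ^ N, 1:] ^ card T) k)"
    using root_norm_bound_if_coeffs_dominated[OF T g0, of "\<lambda>i. c i ^ N" "M ^ N"] m_def by fastforce
  then show ?thesis using that by (meson not_le)
qed

lemma holomorphic_fun_coeff_prod_linear:
  assumes "finite T" "\<And>g. g \<in> T \<Longrightarrow> holomorphic_fun X A (c g)"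
  shows "holomorphic_fun X A (\<lambda>x. coeff (\<Prod>i\<in>T. [:- c i x, 1:]) k)"
  using assms
proof (induction T arbitrary: k rule: finite_induct)
  case empty then show ?case using holomorphic_fun_const[of X A] by simp
next
  case (insert g T)
  have IH: "\<And>k. holomorphic_fun X A (\<lambda>x. coeff (\<Prod>i\<in>T. [:- c i x, 1:]) k)" using insert by auto
  have "holomorphic_fun X A (\<lambda>x. - c g x)"
    using holomorphic_fun_mult[OF holomorphic_fun_const[of X A "-1"], of "c g"] insert by simp
  then have "holomorphic_fun X A (\<lambda>x. - c g x * coeff (\<Prod>i\<in>T. [:- c i x, 1:]) k)"
    by (rule holomorphic_fun_mult[OF _ IH])
  moreover have "holomorphic_fun X A (\<lambda>x. case k of 0 \<Rightarrow> 0 | Suc j \<Rightarrow> coeff (\<Prod>i\<in>T. [:- c i x, 1:]) j)"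
    by (cases k) (simp_all add: holomorphic_fun_const IH)
  ultimately show ?case
    unfolding coeff_prod_linear_insert[OF insert(1,2)] by (rule holomorphic_fun_add)
qed

section \<open>Descent of holomorphic functions\<close>

lemma holomorphic_factor_at_regular_point:
  assumes D: "open D" and w: "w holomorphic_on D" and f: "f holomorphic_on D"
    and factor: "\<And>z. z \<in> D \<Longrightarrow> F (w z) = f z"
    and z1: "z1 \<in> D" and regular: "deriv w z1 \<noteq> 0"
  obtains E where "open E" "w z1 \<in> E" "F holomorphic_on E"
proof -
  obtain r where r: "r > 0" "ball z1 r \<subseteq> D" "inj_on w (ball z1 r)"
    by (rule has_complex_derivative_locally_injective[OF w z1 D regular])
  have wb: "w holomorphic_on ball z1 r" using w r(2) by (rule holomorphic_on_subset)
  obtain g where g: "g holomorphic_on w ` ball z1 r"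
    and "\<And>z. z \<in> ball z1 r \<Longrightarrow> deriv w z * deriv g (w z) = 1"
    and gw: "\<And>z. z \<in> ball z1 r \<Longrightarrow> g (w z) = z"
    using holomorphic_has_inverse[OF wb open_ball r(3)] by blast
  have "g ` w ` ball z1 r \<subseteq> D" using gw r(2) by auto
  then have "(f \<circ> g) holomorphic_on w ` ball z1 r"
    using holomorphic_on_compose_gen[OF g f] by blast
  moreover have "(f \<circ> g) \<zeta> = F \<zeta>" if "\<zeta> \<in> w ` ball z1 r" for \<zeta>
    using that gw factor r(2) by auto
  ultimately have "F holomorphic_on w ` ball z1 r" by (rule holomorphic_transform)
  then show ?thesis using that open_mapping_thm3[OF wb open_ball r(3)] r(1) by auto
qed

text \<open>Applying isolated zeros to (z - z0) w'(z) rather than to w' handles both w'(z0) = 0 and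
w'(z0) \<noteq> 0; if it vanishes identically, w is constant.\<close>

lemma deriv_nonzero_in_punctured_ball:
  assumes w: "w holomorphic_on ball z0 r0" and r0: "0 < r0" and nonconst: "\<not> w constant_on ball z0 r0"
  obtains r where "0 < r" "ball z0 r \<subseteq> ball z0 r0" "\<And>z. z \<in> ball z0 r - {z0} \<Longrightarrow> deriv w z \<noteq> 0"
proof -
  define g where "g = (\<lambda>z. (z - z0) * deriv w z)"
  have "g holomorphic_on ball z0 r0" unfolding g_def
    by (intro holomorphic_intros holomorphic_deriv[OF w open_ball])
  moreover have "z0 \<in> ball z0 r0" "g z0 = 0" using r0 by (simp_all add: g_def)
  moreover have "\<exists>\<beta>\<in>ball z0 r0. g \<beta> \<noteq> 0"
  proof (rule ccontr)
    assume "\<not> ?thesis"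
    then have "\<forall>z\<in>ball z0 r0 - {z0}. (w has_field_derivative 0) (at z)"
      using holomorphic_derivI[OF w open_ball] by (fastforce simp: g_def)
    then have "w constant_on ball z0 r0"
      using DERIV_zero_connected_constant_on[OF connected_ball open_ball, of "{z0}"]
        holomorphic_on_imp_continuous_on[OF w] by blast
    with nonconst show False ..
  qed
  ultimately obtain r where "0 < r" "ball z0 r \<subseteq> ball z0 r0" "\<And>z. z \<in> ball z0 r - {z0} \<Longrightarrow> g z \<noteq> 0"
    using isolated_zeros[OF _ open_ball connected_ball] by metis
  then show ?thesis using that by (simp add: g_def)
qed

lemma continuous_on_factor_through_open_map:
  assumes f: "continuous_on D f" and D: "open D"
    and open_map: "\<And>U. open U \<Longrightarrow> U \<subseteq> D \<Longrightarrow> open (w ` U)"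
    and factor: "\<And>z. z \<in> D \<Longrightarrow> F (w z) = f z"
  shows "continuous_on (w ` D) F"
  unfolding continuous_on_open_invariant
proof (intro allI impI)
  fix Q :: "'b set" assume "open Q"
  then have "open (f -` Q \<inter> D)" using continuous_on_open_vimage[OF D] f by blast
  then have "open (w ` (f -` Q \<inter> D))" by (rule open_map) blast
  moreover have "w ` (f -` Q \<inter> D) \<inter> w ` D = F -` Q \<inter> w ` D"
    using factor by auto
  ultimately show "\<exists>A. open A \<and> A \<inter> w ` D = F -` Q \<inter> w ` D" by blast
qed

lemma not_constant_on_ball_if_finite_level_set:
  fixes z0 :: "'a::{real_normed_vector, perfect_space}"
  assumes "finite {z \<in> ball z0 r. w z = w z0}" "0 < r"
  shows "\<not> w constant_on ball z0 r"
proof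
  assume "w constant_on ball z0 r"
  then have "{z \<in> ball z0 r. w z = w z0} = ball z0 r"
    using assms(2) by (auto simp: constant_on_def)
  then show False using assms finite_imp_not_open[of "ball z0 r"] by simp
qed

text \<open>By the open mapping theorem F is continuous near w z0; away from the single critical value
w z0 it is f composed with a local inverse of w, and that singularity is removable.\<close>

lemma holomorphic_factor_locally:
  assumes D: "open D" and z0: "z0 \<in> D" and w: "w holomorphic_on D" and f: "f holomorphic_on D"
    and factor: "\<And>z. z \<in> D \<Longrightarrow> F (w z) = f z"
    and finite_level: "finite {z \<in> D. w z = w z0}"
  obtains E where "open E" "w z0 \<in> E" "F holomorphic_on E"
proof -
  have nonconst: "\<not> w constant_on ball z0 r" if "0 < r" "ball z0 r \<subseteq> D" for r
  proof -
    have "{z \<in> ball z0 r. w z = w z0} \<subseteq> {z \<in> D. w z = w z0}" using that(2) by blast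
    then have "finite {z \<in> ball z0 r. w z = w z0}" using finite_level by (rule finite_subset)
    then show ?thesis using that(1) by (rule not_constant_on_ball_if_finite_level_set)
  qed
  obtain r0 where r0: "0 < r0" "ball z0 r0 \<subseteq> D" using D z0 open_contains_ball by blast
  obtain r where r: "0 < r" "ball z0 r \<subseteq> ball z0 r0"
    and regular: "\<And>z. z \<in> ball z0 r - {z0} \<Longrightarrow> deriv w z \<noteq> 0"
    using deriv_nonzero_in_punctured_ball[OF holomorphic_on_subset[OF w r0(2)] r0(1) nonconst[OF r0]]
    by blast
  define BB where "BB = ball z0 r"
  have BBD: "BB \<subseteq> D" using r r0 BB_def by blast
  have wB: "w holomorphic_on BB" and fB: "f holomorphic_on BB"
    using w f BBD by (auto intro: holomorphic_on_subset)
  have open_map: "open (w ` U)" if "open U" "U \<subseteq> BB" for U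
    using open_mapping_thm[OF wB _ _ that] nonconst[OF r(1)] BBD by (simp add: BB_def)
  define E where "E = w ` BB"
  have E: "open E" "w z0 \<in> E" using open_map r(1) by (auto simp: E_def BB_def)
  have factorB: "F (w z) = f z" if "z \<in> BB" for z using factor BBD that by blast
  have "continuous_on E F" unfolding E_def
    by (rule continuous_on_factor_through_open_map[OF holomorphic_on_imp_continuous_on[OF fB] _ open_map factorB])
      (simp_all add: BB_def)
  moreover have "F holomorphic_on E - {w z0}"
  proof (rule holomorphic_on_if_locally_holomorphic)
    show "open (E - {w z0})" using E by blast
    fix \<zeta> assume "\<zeta> \<in> E - {w z0}"
    then obtain z1 where z1: "z1 \<in> BB" "z1 \<noteq> z0" and \<zeta>: "\<zeta> = w z1" by (auto simp: E_def)
    obtain T where "open T" "w z1 \<in> T" "F holomorphic_on T"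
      using holomorphic_factor_at_regular_point[OF _ wB fB factorB z1(1)] regular z1
      by (auto simp: BB_def)
    then show "\<exists>T. open T \<and> \<zeta> \<in> T \<and> F holomorphic_on T" using \<zeta> by blast
  qed
  ultimately have "F holomorphic_on E" using no_isolated_singularity[OF _ _ E(1)] by blast
  then show ?thesis using that E by blast
qed

lemma finite_level_set_in_charts:
  assumes AX: "complex_atlas X A" and BY: "complex_atlas Y B"
    and UA: "(U,\<phi>) \<in> A" and VB: "(V,\<psi>) \<in> B" and x0: "x0 \<in> U" "\<pi> x0 \<in> V"
    and finite_fibre: "finite {x \<in> topspace X. \<pi> x = \<pi> x0}"
  shows "finite {z \<in> \<phi> ` (U \<inter> {x \<in> topspace X. \<pi> x \<in> V}).
                  (\<psi> \<circ> \<pi> \<circ> inv_into U \<phi>) z = (\<psi> \<circ> \<pi> \<circ> inv_into U \<phi>) (\<phi> x0)}"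
    (is "finite ?L")
proof -
  note c = complex_atlas_chartD[OF AX UA] and d = complex_atlas_chartD[OF BY VB]
  have "inv_into U \<phi> ` ?L \<subseteq> {x \<in> topspace X. \<pi> x = \<pi> x0}"
  proof
    fix t assume "t \<in> inv_into U \<phi> ` ?L"
    then obtain x where "x \<in> U" "x \<in> topspace X" "\<pi> x \<in> V" "t = x" "\<psi> (\<pi> x) = \<psi> (\<pi> x0)"
      using c(6) x0 by auto
    then show "t \<in> {x \<in> topspace X. \<pi> x = \<pi> x0}" using d(5) x0(2) by (auto dest: inj_onD)
  qed
  moreover have "inj_on (inv_into U \<phi>) ?L" by (intro inj_on_inv_into) auto
  ultimately show ?thesis by (rule finite_imageD[OF finite_subset[OF _ finite_fibre]])
qed

lemma holomorphic_fun_descends: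
  assumes AX: "complex_atlas X A" and BY: "complex_atlas Y B"
    and surj: "\<pi> ` topspace X = topspace Y" and hol: "holomorphic_map X A Y B \<pi>"
    and finite_fibres: "\<And>x. x \<in> topspace X \<Longrightarrow> finite {x' \<in> topspace X. \<pi> x' = \<pi> x}"
    and u: "holomorphic_fun X A u" and v: "\<And>x. x \<in> topspace X \<Longrightarrow> v (\<pi> x) = u x"
  shows "holomorphic_fun Y B v"
  unfolding holomorphic_fun_def
proof clarify
  fix V \<psi> assume VB: "(V,\<psi>) \<in> B"
  note d = complex_atlas_chartD[OF BY VB]
  show "(v \<circ> inv_into V \<psi>) holomorphic_on \<psi> ` V"
  proof (rule holomorphic_on_if_locally_holomorphic[OF d(2)])
    fix \<zeta>0 assume "\<zeta>0 \<in> \<psi> ` V"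
    then obtain y0 where y0V: "y0 \<in> V" and \<zeta>0: "\<zeta>0 = \<psi> y0" by blast
    then have "y0 \<in> \<pi> ` topspace X" using surj d(4) by blast
    then obtain x0 where x0X: "x0 \<in> topspace X" and px0: "\<pi> x0 = y0" by blast
    obtain U \<phi> where UA: "(U,\<phi>) \<in> A" and x0U: "x0 \<in> U" using complex_atlas_cover[OF AX x0X] by blast
    note c = complex_atlas_chartD[OF AX UA]
    define W where "W = U \<inter> {x \<in> topspace X. \<pi> x \<in> V}"
    define D where "D = \<phi> ` W"
    have "continuous_map X Y \<pi>" using hol by (simp add: holomorphic_map_def)
    then have "openin X W" unfolding W_def
      by (rule openin_Int[OF c(1) openin_continuous_map_preimage[OF _ d(1)]])
    then have D: "open D" unfolding D_def by (rule complex_atlas_open_chart_image[OF AX UA]) (simp add: W_def)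
    define z0 where "z0 = \<phi> x0"
    have z0: "z0 \<in> D" unfolding z0_def D_def W_def using x0U x0X px0 y0V by blast
    define w where "w = \<psi> \<circ> \<pi> \<circ> inv_into U \<phi>"
    have w: "w holomorphic_on D" unfolding w_def D_def W_def by (rule holomorphic_map_chartD[OF hol UA VB])
    have f: "(u \<circ> inv_into U \<phi>) holomorphic_on D"
      using holomorphic_fun_chartD[OF u UA] by (rule holomorphic_on_subset) (auto simp: D_def W_def)
    have factor: "(v \<circ> inv_into V \<psi>) (w z) = (u \<circ> inv_into U \<phi>) z" if "z \<in> D" for z
      using that c(6) d(6) v by (auto simp: D_def W_def w_def)
    have finite_level: "finite {z \<in> D. w z = w z0}"
      unfolding D_def W_def w_def z0_def
      by (rule finite_level_set_in_charts[OF AX BY UA VB x0U _ finite_fibres[OF x0X]]) (simp add: px0 y0V)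
    obtain E where "open E" "w z0 \<in> E" "(v \<circ> inv_into V \<psi>) holomorphic_on E"
      by (rule holomorphic_factor_locally[OF D z0 w f factor finite_level])
    moreover have "w z0 = \<zeta>0" using c(6)[OF x0U] px0 \<zeta>0 by (simp add: w_def z0_def)
    ultimately show "\<exists>T. open T \<and> \<zeta>0 \<in> T \<and> (v \<circ> inv_into V \<psi>) holomorphic_on T" by blast
  qed
qed

section \<open>Runge sets and quotients by finite groups\<close>

lemma finite_orbit_fibres:
  fixes G (structure)
  assumes fin: "finite (carrier G)"
    and fib: "\<And>x y. x \<in> E \<Longrightarrow> y \<in> E \<Longrightarrow> (\<pi> x = \<pi> y \<longleftrightarrow> (\<exists>g\<in>carrier G. \<phi> g x = y))"
    and x: "x \<in> E"
  shows "finite {x' \<in> E. \<pi> x' = \<pi> x}"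
proof -
  have "{x' \<in> E. \<pi> x' = \<pi> x} \<subseteq> (\<lambda>g. \<phi> g x) ` carrier G"
    using fib[OF x] by force
  then show ?thesis by (rule finite_subset[OF _ finite_imageI[OF fin]])
qed

lemma proper_map_orbit_quotient:
  fixes G (structure)
  assumes quot: "quotient_map X Y \<pi>" and fin: "finite (carrier G)"
    and cont: "\<And>g. g \<in> carrier G \<Longrightarrow> continuous_map X X (\<phi> g)"
    and fib: "\<And>x y. x \<in> topspace X \<Longrightarrow> y \<in> topspace X \<Longrightarrow> (\<pi> x = \<pi> y \<longleftrightarrow> (\<exists>g\<in>carrier G. \<phi> g x = y))"
  shows "proper_map X Y \<pi>"
  unfolding proper_map_def
proof (intro conjI ballI)
  show "closed_map X Y \<pi>"
    unfolding closed_map_def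
  proof (intro allI impI)
    fix C assume C: "closedin X C"
    have "{x \<in> topspace X. \<pi> x \<in> \<pi> ` C} = (\<Union>g\<in>carrier G. {x \<in> topspace X. \<phi> g x \<in> C})"
    proof (intro equalityI subsetI)
      fix x assume "x \<in> {x \<in> topspace X. \<pi> x \<in> \<pi> ` C}"
      then obtain c where "x \<in> topspace X" "c \<in> C" "\<pi> x = \<pi> c" by blast
      moreover then obtain g where "g \<in> carrier G" "\<phi> g x = c"
        using fib closedin_subset[OF C] by blast
      ultimately show "x \<in> (\<Union>g\<in>carrier G. {x \<in> topspace X. \<phi> g x \<in> C})" by blast
    next
      fix x assume "x \<in> (\<Union>g\<in>carrier G. {x \<in> topspace X. \<phi> g x \<in> C})"
      then obtain g where g: "g \<in> carrier G" "x \<in> topspace X" "\<phi> g x \<in> C" by blast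
      moreover have "\<phi> g x \<in> topspace X" using cont[OF g(1)] g(2) by (simp add: continuous_map_def Pi_iff)
      ultimately have "\<pi> (\<phi> g x) = \<pi> x" using fib by metis
      then show "x \<in> {x \<in> topspace X. \<pi> x \<in> \<pi> ` C}" using g by (metis (mono_tags, lifting) image_eqI mem_Collect_eq)
    qed
    moreover have "closedin X (\<Union>g\<in>carrier G. {x \<in> topspace X. \<phi> g x \<in> C})"
      using fin closedin_continuous_map_preimage[OF cont C] by (intro closedin_Union) auto
    moreover have "\<pi> ` C \<subseteq> topspace Y"
      using quot closedin_subset[OF C] by (auto simp: quotient_map_def)
    then have "closedin X {x \<in> topspace X. \<pi> x \<in> \<pi> ` C} \<longleftrightarrow> closedin Y (\<pi> ` C)"
      using quot by (simp add: quotient_map_closedin)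
    ultimately show "closedin Y (\<pi> ` C)" by simp
  qed
next
  fix y assume "y \<in> topspace Y"
  then have "y \<in> \<pi> ` topspace X" using quot by (simp add: quotient_map_def)
  then obtain x where x: "x \<in> topspace X" "\<pi> x = y" by blast
  then show "compactin X {x \<in> topspace X. \<pi> x = y}"
    using finite_orbit_fibres[OF fin fib x(1)] by (intro finite_imp_compactin) auto
qed

lemma runge_preimage:
  assumes AX: "complex_atlas X A" and BY: "complex_atlas Y B"
    and hol: "holomorphic_map X A Y B \<pi>" and proper: "proper_map X Y \<pi>"
    and R: "runge Y B S'"
  shows "runge X A {x \<in> topspace X. \<pi> x \<in> S'}"
  unfolding runge_def
proof (intro conjI ballI)
  show "compactin X {x \<in> topspace X. \<pi> x \<in> S'}"
    using R compactin_proper_map_preimage[OF proper] by (simp add: runge_def)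
  have \<pi>: "continuous_map X Y \<pi>" using hol by (simp add: holomorphic_map_def)
  fix p assume "p \<in> topspace X - {x \<in> topspace X. \<pi> x \<in> S'}"
  then have "\<pi> p \<in> topspace Y - S'" using \<pi> by (auto simp: continuous_map_def)
  then obtain h where "holomorphic_fun Y B h" "\<forall>y\<in>S'. norm (h y) < norm (h (\<pi> p))"
    using R unfolding runge_def by blast
  then show "\<exists>h. holomorphic_fun X A h \<and> (\<forall>x\<in>{x \<in> topspace X. \<pi> x \<in> S'}. norm (h x) < norm (h p))"
    using holomorphic_fun_comp[OF AX BY hol] by fastforce
qed

lemma continuous_map_norm_attains_max:
  fixes h :: "'a \<Rightarrow> 'b::real_normed_vector"
  assumes "continuous_map X euclidean h" "compactin X S" "S \<noteq> {}"
  obtains x where "x \<in> S" "\<And>y. y \<in> S \<Longrightarrow> norm (h y) \<le> norm (h x)"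
proof -
  have "compact (h ` S)" using image_compactin[OF assms(2,1)] by simp
  then have "compact (norm ` h ` S)" by (rule compact_continuous_image[OF continuous_on_norm_id])
  then obtain s where "s \<in> norm ` h ` S" "\<forall>t\<in>norm ` h ` S. t \<le> s"
    using compact_attains_sup assms(3) by blast
  then show ?thesis using that by blast
qed

lemma invariant_peak_function:
  fixes G (structure) and h :: "'a \<Rightarrow> complex"
  assumes grp: "group G" and fin: "finite (carrier G)" and act: "group_action G (topspace X) \<phi>"
    and AX: "complex_atlas X A" and aut: "\<And>g. g \<in> carrier G \<Longrightarrow> holomorphic_map X A X A (\<phi> g)"
    and h: "holomorphic_fun X A h" and p: "p \<in> topspace X" and M: "0 \<le> M" "M < norm (h p)"
  obtains u where "holomorphic_fun X A u" "\<forall>g\<in>carrier G. \<forall>x\<in>topspace X. u (\<phi> g x) = u x"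
    "\<forall>x\<in>topspace X. (\<forall>g\<in>carrier G. norm (h (\<phi> g x)) \<le> M) \<longrightarrow> norm (u x) < norm (u p)"
proof -
  interpret group G by (rule grp)
  have "\<phi> \<one> p = p" using group_action.id_eq_one[OF act, symmetric] p by simp
  then obtain N k where gap:
    "coeff ([:M ^ N, 1:] ^ card (carrier G)) k < norm (coeff (\<Prod>i\<in>carrier G. [:- (h (\<phi> i p) ^ N), 1:]) k)"
    using exists_coeff_prod_power_gap[OF fin one_closed M(1), of "\<lambda>g. h (\<phi> g p)"] M(2) by auto
  define u where "u x = coeff (\<Prod>i\<in>carrier G. [:- (h (\<phi> i x) ^ N), 1:]) k" for x
  show ?thesis
  proof (rule that; (intro ballI impI)?)
    show "holomorphic_fun X A u" unfolding u_def
      using holomorphic_fun_power[OF holomorphic_fun_comp[OF AX AX aut h]]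
      by (intro holomorphic_fun_coeff_prod_linear[OF fin]) (simp add: o_def)
  next
    fix g x assume g: "g \<in> carrier G" and x: "x \<in> topspace X"
    have "(\<Prod>i\<in>carrier G. [:- (h (\<phi> i (\<phi> g x)) ^ N), 1:]) = (\<Prod>i\<in>carrier G. [:- (h (\<phi> (i \<otimes> g) x) ^ N), 1:])"
      using group_action.composition_rule[OF act x _ g] by simp
    also have "\<dots> = (\<Prod>i\<in>carrier G. [:- (h (\<phi> i x) ^ N), 1:])"
    proof (rule prod.reindex_bij_witness[where i = "\<lambda>i. i \<otimes> inv g" and j = "\<lambda>i. i \<otimes> g"])
    qed (use g in \<open>auto simp: m_assoc\<close>)
    finally show "u (\<phi> g x) = u x" by (simp add: u_def)
  next
    fix x assume "x \<in> topspace X" and bound: "\<forall>g\<in>carrier G. norm (h (\<phi> g x)) \<le> M"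
    have "norm (h (\<phi> g x) ^ N) \<le> M ^ N" if "g \<in> carrier G" for g
      using bound that by (simp add: norm_power power_mono)
    then have "norm (u x) \<le> coeff ([:M ^ N, 1:] ^ card (carrier G)) k"
      unfolding u_def by (rule norm_coeff_prod_linear_le[OF fin])
    then show "norm (u x) < norm (u p)" using gap by (simp add: u_def)
  qed
qed

lemma orbit_invariant_fun_descends:
  fixes G (structure)
  assumes AX: "complex_atlas X A" and BY: "complex_atlas Y B" and fin: "finite (carrier G)"
    and surj: "\<pi> ` topspace X = topspace Y" and hol: "holomorphic_map X A Y B \<pi>"
    and fib: "\<And>x y. x \<in> topspace X \<Longrightarrow> y \<in> topspace X \<Longrightarrow> (\<pi> x = \<pi> y \<longleftrightarrow> (\<exists>g\<in>carrier G. \<phi> g x = y))"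
    and u: "holomorphic_fun X A u"
    and invariant: "\<forall>g\<in>carrier G. \<forall>x\<in>topspace X. u (\<phi> g x) = u x"
  obtains v where "holomorphic_fun Y B v" "\<forall>x\<in>topspace X. v (\<pi> x) = u x"
proof -
  define v where "v y = u (inv_into (topspace X) \<pi> y)" for y
  have v: "v (\<pi> x) = u x" if x: "x \<in> topspace X" for x
  proof -
    define x' where "x' = inv_into (topspace X) \<pi> (\<pi> x)"
    have x': "x' \<in> topspace X" "\<pi> x' = \<pi> x"
      using x by (auto simp: x'_def inv_into_into f_inv_into_f)
    then obtain g where "g \<in> carrier G" "\<phi> g x' = x" using fib[OF x'(1) x] by blast
    then show ?thesis using invariant x'(1) by (metis v_def x'_def)
  qed
  have "\<forall>x\<in>topspace X. v (\<pi> x) = u x" using v by blast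
  with holomorphic_fun_descends[OF AX BY surj hol finite_orbit_fibres[OF fin fib] u v] show ?thesis
    by (rule that)
qed

lemma runge_of_runge_preimage:
  fixes G (structure)
  assumes AX: "complex_atlas X A" and BY: "complex_atlas Y B"
    and grp: "group G" and fin: "finite (carrier G)" and act: "group_action G (topspace X) \<phi>"
    and aut: "\<And>g. g \<in> carrier G \<Longrightarrow> holomorphic_map X A X A (\<phi> g)"
    and surj: "\<pi> ` topspace X = topspace Y" and hol: "holomorphic_map X A Y B \<pi>"
    and fib: "\<And>x y. x \<in> topspace X \<Longrightarrow> y \<in> topspace X \<Longrightarrow> (\<pi> x = \<pi> y \<longleftrightarrow> (\<exists>g\<in>carrier G. \<phi> g x = y))"
    and cpt: "compactin Y S'" and R: "runge X A {x \<in> topspace X. \<pi> x \<in> S'}"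
  shows "runge Y B S'"
  unfolding runge_def
proof (intro conjI cpt ballI)
  define S where "S = {x \<in> topspace X. \<pi> x \<in> S'}"
  have orbit: "\<phi> g x \<in> topspace X \<and> \<pi> (\<phi> g x) = \<pi> x" if "g \<in> carrier G" "x \<in> topspace X" for g x
    using group_action.element_image[OF act that refl] fib that by metis
  have lift: "\<exists>x\<in>topspace X. \<pi> x = y" if "y \<in> topspace Y" for y
  proof -
    have "y \<in> \<pi> ` topspace X" using that surj by simp
    then show ?thesis by blast
  qed
  have S'Y: "S' \<subseteq> topspace Y" using cpt compactin_subset_topspace by blast
  fix q assume q: "q \<in> topspace Y - S'"
  then obtain p where p: "p \<in> topspace X" "\<pi> p = q" "p \<notin> S" using lift by (auto simp: S_def)
  then obtain h where h: "holomorphic_fun X A h" and peak: "\<forall>x\<in>S. norm (h x) < norm (h p)"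
    using R unfolding runge_def S_def by blast
  show "\<exists>v. holomorphic_fun Y B v \<and> (\<forall>y\<in>S'. norm (v y) < norm (v q))"
  proof (cases "S' = {}")
    case True
    then show ?thesis using holomorphic_fun_const by blast
  next
    case False
    then have "S \<noteq> {}" using lift S'Y by (fastforce simp: S_def)
    then obtain xm where xm: "xm \<in> S" and max: "\<And>x. x \<in> S \<Longrightarrow> norm (h x) \<le> norm (h xm)"
      using continuous_map_norm_attains_max[OF holomorphic_fun_continuous_map[OF AX h]] R
      by (metis S_def runge_def)
    obtain u where u: "holomorphic_fun X A u"
      and invariant: "\<forall>g\<in>carrier G. \<forall>x\<in>topspace X. u (\<phi> g x) = u x"
      and u_peak: "\<forall>x\<in>topspace X. (\<forall>g\<in>carrier G. norm (h (\<phi> g x)) \<le> norm (h xm)) \<longrightarrow> norm (u x) < norm (u p)"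
      by (rule invariant_peak_function[OF grp fin act AX _ h p(1) norm_ge_zero peak[rule_format, OF xm]])
        (rule aut)
    obtain v where "holomorphic_fun Y B v" and v: "\<forall>x\<in>topspace X. v (\<pi> x) = u x"
      by (rule orbit_invariant_fun_descends[OF AX BY fin surj hol fib u invariant])
    moreover have "norm (v y) < norm (v q)" if "y \<in> S'" for y
    proof -
      obtain x where x: "x \<in> topspace X" "\<pi> x = y"
        using \<open>y \<in> S'\<close> lift S'Y by blast
      then have "norm (u x) < norm (u p)"
        using u_peak max orbit \<open>y \<in> S'\<close> by (auto simp: S_def)
      then show ?thesis using v x p by auto
    qed
    ultimately show ?thesis by blast
  qed
qed

theorem lemma4p2:
  fixes X :: "'a topology" and A :: "('a set \<times> ('a \<Rightarrow> complex)) set"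
    and Y :: "'b topology" and B :: "('b set \<times> ('b \<Rightarrow> complex)) set"
    and G (structure) and \<phi> :: "'g \<Rightarrow> 'a \<Rightarrow> 'a"
    and \<pi> :: "'a \<Rightarrow> 'b" and S' :: "'b set"
  assumes X: "open_riemann_surface X A"
    and grp: "group G" and fin: "finite (carrier G)"
    and act: "group_action G (topspace X) \<phi>"
    and aut: "\<And>g. g \<in> carrier G \<Longrightarrow> holomorphic_automorphism X A (\<phi> g)"
    and trans: "\<And>C C'. C \<in> connected_components_of X \<Longrightarrow> C' \<in> connected_components_of X
                  \<Longrightarrow> \<exists>g\<in>carrier G. \<phi> g ` C = C'"
    and eff: "\<And>C g. C \<in> connected_components_of X \<Longrightarrow> g \<in> carrier G \<Longrightarrow> \<phi> g ` C = C
                  \<Longrightarrow> (\<forall>x\<in>C. \<phi> g x = x) \<Longrightarrow> g = \<one>"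
    and Y: "riemann_surface Y B" and Yconn: "connected_space Y"
    and quot: "quotient_map X Y \<pi>"
    and fib: "\<And>x y. x \<in> topspace X \<Longrightarrow> y \<in> topspace X \<Longrightarrow>
                  (\<pi> x = \<pi> y \<longleftrightarrow> (\<exists>g\<in>carrier G. \<phi> g x = y))"
    and hol: "holomorphic_map X A Y B \<pi>"
    and cpt: "compactin Y S'"
  shows "runge Y B S' \<longleftrightarrow> runge X A {x \<in> topspace X. \<pi> x \<in> S'}"
proof -
  have AX: "complex_atlas X A" and BY: "complex_atlas Y B"
    using X Y by (simp_all add: open_riemann_surface_def riemann_surface_def)
  have aut_map: "holomorphic_map X A X A (\<phi> g)" if "g \<in> carrier G" for g
    using aut[OF that] by (simp add: holomorphic_automorphism_def)
  have "proper_map X Y \<pi>"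
    using proper_map_orbit_quotient[OF quot fin _ fib] aut_map by (simp add: holomorphic_map_def)
  moreover have "\<pi> ` topspace X = topspace Y" using quot by (simp add: quotient_map_def)
  ultimately show ?thesis
    using runge_preimage[OF AX BY hol] runge_of_runge_preimage[OF AX BY grp fin act aut_map _ hol fib cpt]
    by blast
qed

end
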